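(* Let $\mathbb{K}$ be a field, $S=\mathbb{K}[x_1,\ldots,x_n]$, and let $I\subseteq S$ be a support-$2$ monomial ideal such that the girth of $G(I)$ is at least six. Let $\{x_i,x_j\}\in E(G(I))$ be such that $\alpha_{i,j}\geq 2$. Suppose that $d(x_i,x_\ell)\ge 2$ for every leaf vertex $x_\ell$ of $G(I)$, or that $d(x_j,x_\ell)\ge 2$ for every leaf vertex $x_\ell$ of $G(I)$. Then $I^{(1)}\neq I$.
   Context: For a monomial ideal $I$, $\mathcal{G}(I)$ denotes its minimal set of monomial generators. $I$ is a support-$2$ monomial ideal if $\mathcal{G}(I)\subseteq\{x_i^ax_j^b : 1\le i<j\le n,\ a,b\ge 1\}$. The underlying simple graph $G(I)$ has vertices $x_1,\ldots,x_n$ and an edge $\{x_i,x_j\}$ whenever some element of $\mathcal{G}(I)$ has support $\{x_i,x_j\}$. For an edge $\{x_i,x_j\}$, $\alpha_{i,j}$ is the number of elements of $\mathcal{G}(I)$ whose support is exactly $\{x_i,x_j\}$. The girth of a graph is the length of its shortest cycle; a leaf is a vertex of degree $1$; $d(x,y)$ is the length of a shortest path between $x$ and $y$. $I^{(1)}=\bigcap_{P\in\mathrm{MinAss}(I)}(IS_P\cap S)$, the intersection of the primary components of $I$ at its minimal primes. *)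

theory Defs
  imports "HOL-Library.Poly_Mapping" "HOL-Library.Extended_Nat"
begin

text \<open>Polynomial ring S = K[x_v : v in 'v] over a field K, with a finite type 'v of variables
  (n = CARD('v)).\<close>

type_synonym ('v, 'k) mpoly = "('v \<Rightarrow>\<^sub>0 nat) \<Rightarrow>\<^sub>0 'k"

definition monom_of :: "('v \<Rightarrow>\<^sub>0 nat) \<Rightarrow> ('v, 'k::comm_ring_1) mpoly" where
  "monom_of m = Poly_Mapping.single m 1"

definition is_ideal :: "('a::comm_ring_1) set \<Rightarrow> bool" where
  "is_ideal I \<longleftrightarrow> 0 \<in> I \<and> (\<forall>a\<in>I. \<forall>b\<in>I. a + b \<in> I) \<and> (\<forall>r. \<forall>a\<in>I. r * a \<in> I)"

definition ideal_gen :: "('a::comm_ring_1) set \<Rightarrow> 'a set" where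
  "ideal_gen G = \<Inter> {J. is_ideal J \<and> G \<subseteq> J}"

definition is_prime_ideal :: "('a::comm_ring_1) set \<Rightarrow> bool" where
  "is_prime_ideal P \<longleftrightarrow> is_ideal P \<and> P \<noteq> UNIV \<and> (\<forall>a b. a * b \<in> P \<longrightarrow> a \<in> P \<or> b \<in> P)"

text \<open>Minimal primes of I (= minimal associated primes MinAss(I)).\<close>
definition min_primes :: "('a::comm_ring_1) set \<Rightarrow> 'a set set" where
  "min_primes I = {P. is_prime_ideal P \<and> I \<subseteq> P \<and>
     (\<forall>Q. is_prime_ideal Q \<and> I \<subseteq> Q \<and> Q \<subseteq> P \<longrightarrow> Q = P)}"

text \<open>Contraction of the localization: I S_P \<inter> S = {f. \<exists>s\<notin>P. s f \<in> I}.\<close>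
definition loc_contr :: "('a::comm_ring_1) set \<Rightarrow> 'a set \<Rightarrow> 'a set" where
  "loc_contr I P = {f. \<exists>s. s \<notin> P \<and> s * f \<in> I}"

definition symb_power1 :: "('a::comm_ring_1) set \<Rightarrow> 'a set" where
  "symb_power1 I = (\<Inter>P\<in>min_primes I. loc_contr I P)"

definition is_monomial_ideal :: "('v, 'k::comm_ring_1) mpoly set \<Rightarrow> bool" where
  "is_monomial_ideal I \<longleftrightarrow> (\<exists>G. I = ideal_gen (monom_of ` G))"

definition mdvd :: "('v \<Rightarrow>\<^sub>0 nat) \<Rightarrow> ('v \<Rightarrow>\<^sub>0 nat) \<Rightarrow> bool" where
  "mdvd a b \<longleftrightarrow> (\<forall>v. Poly_Mapping.lookup a v \<le> Poly_Mapping.lookup b v)"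

definition min_gens :: "('v, 'k::comm_ring_1) mpoly set \<Rightarrow> ('v \<Rightarrow>\<^sub>0 nat) set" where
  "min_gens I = {m. monom_of m \<in> I \<and> (\<forall>m'. monom_of m' \<in> I \<and> mdvd m' m \<longrightarrow> m' = m)}"

definition support2 :: "('v, 'k::comm_ring_1) mpoly set \<Rightarrow> bool" where
  "support2 I \<longleftrightarrow> is_monomial_ideal I \<and> (\<forall>m\<in>min_gens I. card (Poly_Mapping.keys m) = 2)"

text \<open>Underlying simple graph G(I).\<close>
definition gadj :: "('v, 'k::comm_ring_1) mpoly set \<Rightarrow> 'v \<Rightarrow> 'v \<Rightarrow> bool" where
  "gadj I u w \<longleftrightarrow> u \<noteq> w \<and> (\<exists>m\<in>min_gens I. Poly_Mapping.keys m = {u, w})"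

definition alpha :: "('v, 'k::comm_ring_1) mpoly set \<Rightarrow> 'v \<Rightarrow> 'v \<Rightarrow> nat" where
  "alpha I u w = card {m\<in>min_gens I. Poly_Mapping.keys m = {u, w}}"

definition has_cycle_len :: "('v \<Rightarrow> 'v \<Rightarrow> bool) \<Rightarrow> nat \<Rightarrow> bool" where
  "has_cycle_len E k \<longleftrightarrow> k \<ge> 3 \<and> (\<exists>xs. length xs = k \<and> distinct xs \<and>
      (\<forall>i. Suc i < k \<longrightarrow> E (xs ! i) (xs ! Suc i)) \<and> E (xs ! (k - 1)) (xs ! 0))"

text \<open>girth(E) \<ge> g: no cycle of length < g (acyclic graphs have infinite girth).\<close>
definition girth_ge :: "('v \<Rightarrow> 'v \<Rightarrow> bool) \<Rightarrow> nat \<Rightarrow> bool" where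
  "girth_ge E g \<longleftrightarrow> (\<forall>k. k < g \<longrightarrow> \<not> has_cycle_len E k)"

definition is_leaf :: "('v \<Rightarrow> 'v \<Rightarrow> bool) \<Rightarrow> 'v \<Rightarrow> bool" where
  "is_leaf E v \<longleftrightarrow> card {w. E v w} = 1"

definition walk_of_len :: "('v \<Rightarrow> 'v \<Rightarrow> bool) \<Rightarrow> 'v \<Rightarrow> 'v \<Rightarrow> nat \<Rightarrow> bool" where
  "walk_of_len E x y k \<longleftrightarrow> (\<exists>xs. length xs = Suc k \<and> hd xs = x \<and> last xs = y \<and>
      (\<forall>i. Suc i < length xs \<longrightarrow> E (xs ! i) (xs ! Suc i)))"

text \<open>Graph distance (\<infinity> if no path).\<close>
definition gdist :: "('v \<Rightarrow> 'v \<Rightarrow> bool) \<Rightarrow> 'v \<Rightarrow> 'v \<Rightarrow> enat" where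
  "gdist E x y = (INF k\<in>{k. walk_of_len E x y k}. enat k)"

end

theory Submission
  imports Defs "HOL-Library.Countable"
begin

(* Let A and B be the least x_i- and x_j-exponents among the (at least two) minimal generators
   supported on {x_i, x_j}, let M be the set of vertices at distance two from x_i reached through
   a neighbour other than x_j, and let f be x_i^A x_j^B times the product of x_m^E over m in M,
   where E bounds the generator exponents. Girth at least six means that {x_i, x_j} together with
   M spans no edge except {x_i, x_j}, so a generator dividing f would be supported on {x_i, x_j}
   and divide x_i^A x_j^B; it would then divide all those generators, which are pairwise
   incomparable. Hence f is not in I. On the other hand, for every minimal prime P some power of a
   variable outside P multiplies f into I: x_j (resp. x_i) if it lies outside P, and otherwise a
   neighbour x_k of x_i outside P, which exists by minimality of P; being adjacent to x_i, it is
   not a leaf, so it has a neighbour in M. Hence f lies in I^(1). *)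

text \<open>The library proves the domain property only for linearly ordered exponent monoids; an
  injective additive map into such a monoid is enough to run its leading-term argument.\<close>
lemma poly_mapping_mult_neq_zero_by_embedding:
  fixes a b :: "'m::monoid_add \<Rightarrow>\<^sub>0 'k::semiring_no_zero_divisors"
    and \<kappa> :: "'m \<Rightarrow> 'o::{ordered_cancel_comm_monoid_add, linorder}"
  assumes inj: "inj \<kappa>" and additive: "\<And>x y. \<kappa> (x + y) = \<kappa> x + \<kappa> y"
    and "a \<noteq> 0" "b \<noteq> 0"
  shows "a * b \<noteq> 0"
proof -
  have top_key: "\<exists>x\<in>Poly_Mapping.keys p. \<forall>y\<in>Poly_Mapping.keys p. \<kappa> y \<le> \<kappa> x"
    if "p \<noteq> 0" for p :: "'m \<Rightarrow>\<^sub>0 'k"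
  proof -
    have "Max (\<kappa> ` Poly_Mapping.keys p) \<in> \<kappa> ` Poly_Mapping.keys p"
      using that by simp
    then show ?thesis by (metis Max_ge finite_imageI finite_keys imageE image_eqI)
  qed
  obtain a0 where a0: "a0 \<in> Poly_Mapping.keys a" "\<And>x. x \<in> Poly_Mapping.keys a \<Longrightarrow> \<kappa> x \<le> \<kappa> a0"
    using top_key[OF \<open>a \<noteq> 0\<close>] by blast
  obtain b0 where b0: "b0 \<in> Poly_Mapping.keys b" "\<And>y. y \<in> Poly_Mapping.keys b \<Longrightarrow> \<kappa> y \<le> \<kappa> b0"
    using top_key[OF \<open>b \<noteq> 0\<close>] by blast
  have unique: "(x, y) = (a0, b0)"
    if "x \<in> Poly_Mapping.keys a" "y \<in> Poly_Mapping.keys b" "a0 + b0 = x + y" for x y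
  proof -
    have "\<kappa> x + \<kappa> y = \<kappa> a0 + \<kappa> b0" using that(3) by (metis additive)
    moreover have "\<kappa> x \<le> \<kappa> a0" "\<kappa> y \<le> \<kappa> b0" using a0(2) b0(2) that by auto
    ultimately have "\<kappa> x = \<kappa> a0 \<and> \<kappa> y = \<kappa> b0"
      by (metis add_less_le_mono add_le_less_mono order_less_irrefl order.not_eq_order_implies_strict)
    then show ?thesis using inj by (simp add: inj_eq)
  qed
  have "Poly_Mapping.lookup (a * b) (a0 + b0) =
      (\<Sum>(x, y). Poly_Mapping.lookup a x * Poly_Mapping.lookup b y when a0 + b0 = x + y)"
    unfolding times_poly_mapping.rep_eq by (rule prod_fun_unfold_prod) simp_all
  also have "\<dots> = Sum_any (\<lambda>xy. Poly_Mapping.lookup a a0 * Poly_Mapping.lookup b b0 when xy = (a0, b0))"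
    by (rule Sum_any.cong) (auto simp: when_def split: if_splits dest: unique[unfolded in_keys_iff])
  also have "\<dots> \<noteq> 0"
    using a0(1) b0(1) by (simp add: in_keys_iff)
  finally show ?thesis by auto
qed

definition nat_exponents :: "('v::countable \<Rightarrow>\<^sub>0 nat) \<Rightarrow> (nat \<Rightarrow>\<^sub>0 nat)" where
  "nat_exponents m = Abs_poly_mapping
     (\<lambda>n. if n \<in> range (to_nat :: 'v \<Rightarrow> nat) then Poly_Mapping.lookup m (from_nat n) else 0)"

lemma lookup_nat_exponents:
  fixes m :: "'v::countable \<Rightarrow>\<^sub>0 nat"
  shows "Poly_Mapping.lookup (nat_exponents m) n =
     (if n \<in> range (to_nat :: 'v \<Rightarrow> nat) then Poly_Mapping.lookup m (from_nat n) else 0)"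
proof -
  let ?f = "\<lambda>n. if n \<in> range (to_nat :: 'v \<Rightarrow> nat) then Poly_Mapping.lookup m (from_nat n) else 0"
  have "{n. ?f n \<noteq> 0} \<subseteq> to_nat ` Poly_Mapping.keys m"
    by (auto simp: in_keys_iff)
  then have "finite {n. ?f n \<noteq> 0}"
    by (rule finite_subset) simp
  then show ?thesis
    unfolding nat_exponents_def by simp
qed

lemma inj_nat_exponents: "inj (nat_exponents :: ('v::countable \<Rightarrow>\<^sub>0 nat) \<Rightarrow> _)"
proof (rule injI)
  fix x y :: "'v \<Rightarrow>\<^sub>0 nat"
  assume "nat_exponents x = nat_exponents y"
  then have "Poly_Mapping.lookup x v = Poly_Mapping.lookup y v" for v
    by (metis (no_types) lookup_nat_exponents from_nat_to_nat rangeI)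
  then show "x = y" by (rule poly_mapping_eqI)
qed

lemma nat_exponents_add:
  fixes x y :: "'v::countable \<Rightarrow>\<^sub>0 nat"
  shows "nat_exponents (x + y) = nat_exponents x + nat_exponents y"
  by (rule poly_mapping_eqI) (simp add: lookup_nat_exponents lookup_add)

lemma mpoly_mult_neq_zero:
  fixes a b :: "('v::countable, 'k::idom) mpoly"
  assumes "a \<noteq> 0" "b \<noteq> 0"
  shows "a * b \<noteq> 0"
  using inj_nat_exponents nat_exponents_add assms by (rule poly_mapping_mult_neq_zero_by_embedding)

lemma ideal_gen_is_ideal: "is_ideal (ideal_gen G)"
  unfolding ideal_gen_def is_ideal_def by auto

lemma ideal_gen_subset: "G \<subseteq> ideal_gen G"
  unfolding ideal_gen_def by auto

lemma ideal_gen_least: "is_ideal J \<Longrightarrow> G \<subseteq> J \<Longrightarrow> ideal_gen G \<subseteq> J"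
  unfolding ideal_gen_def by auto

lemma is_ideal_mult: "is_ideal J \<Longrightarrow> a \<in> J \<Longrightarrow> r * a \<in> J"
  unfolding is_ideal_def by auto

lemma is_ideal_sum:
  assumes "is_ideal J" "\<And>a. a \<in> A \<Longrightarrow> f a \<in> J"
  shows "sum f A \<in> J"
  using assms(2)
  by (induction A rule: infinite_finite_induct) (use assms(1) in \<open>auto simp: is_ideal_def\<close>)

lemma prime_ideal_one_notin: "is_prime_ideal P \<Longrightarrow> 1 \<notin> P"
  unfolding is_prime_ideal_def is_ideal_def by (metis UNIV_eq_I mult.right_neutral)

lemma prime_ideal_power_mem: "is_prime_ideal P \<Longrightarrow> x ^ n \<in> P \<Longrightarrow> x \<in> P"
  by (induction n) (auto simp: prime_ideal_one_notin is_prime_ideal_def)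

lemma prime_ideal_prod_mem:
  assumes "is_prime_ideal P" "prod f A \<in> P"
  shows "\<exists>a\<in>A. f a \<in> P"
  using assms(2)
  by (induction A rule: infinite_finite_induct)
    (use assms(1) in \<open>auto simp: prime_ideal_one_notin is_prime_ideal_def\<close>)

lemma poly_mapping_sum_single_keys:
  "p = (\<Sum>m\<in>Poly_Mapping.keys p. Poly_Mapping.single m (Poly_Mapping.lookup p m))"
  by (rule poly_mapping_eqI) (simp add: lookup_sum lookup_single when_def in_keys_iff)

definition var :: "'v \<Rightarrow> ('v, 'k::comm_ring_1) mpoly" where
  "var v = monom_of (Poly_Mapping.single v 1)"

lemma monom_of_add: "monom_of (a + b) = (monom_of a * monom_of b :: ('v, 'k::comm_ring_1) mpoly)"
  unfolding monom_of_def by (simp add: mult_single)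

lemma monom_of_zero: "monom_of 0 = (1 :: ('v, 'k::comm_ring_1) mpoly)"
  unfolding monom_of_def by simp

lemma monom_of_single: "monom_of (Poly_Mapping.single v n) = (var v ^ n :: ('v, 'k::comm_ring_1) mpoly)"
proof (induction n)
  case (Suc n)
  have "Poly_Mapping.single v (Suc n) = Poly_Mapping.single v 1 + Poly_Mapping.single v n"
    by (simp flip: single_add)
  then show ?case using Suc by (simp add: monom_of_add var_def)
qed (simp add: monom_of_zero)

lemma monom_of_eq_prod_vars:
  "(monom_of m :: ('v, 'k::comm_ring_1) mpoly) =
     (\<Prod>v\<in>Poly_Mapping.keys m. var v ^ Poly_Mapping.lookup m v)"
proof -
  have "monom_of (sum f A) = (\<Prod>a\<in>A. monom_of (f a) :: ('v, 'k) mpoly)" for f and A :: "'v set"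
    by (induction A rule: infinite_finite_induct) (simp_all add: monom_of_zero monom_of_add)
  then have "monom_of (\<Sum>v\<in>Poly_Mapping.keys m. Poly_Mapping.single v (Poly_Mapping.lookup m v)) =
      (\<Prod>v\<in>Poly_Mapping.keys m. var v ^ Poly_Mapping.lookup m v :: ('v, 'k) mpoly)"
    by (simp add: monom_of_single)
  then show ?thesis
    by (simp flip: poly_mapping_sum_single_keys)
qed

lemma monom_in_prime_ideal:
  fixes P :: "('v, 'k::comm_ring_1) mpoly set"
  assumes "is_prime_ideal P" "monom_of m \<in> P"
  shows "\<exists>v\<in>Poly_Mapping.keys m. var v \<in> P"
proof -
  have "(\<Prod>v\<in>Poly_Mapping.keys m. var v ^ Poly_Mapping.lookup m v) \<in> P"
    using assms(2) by (simp flip: monom_of_eq_prod_vars)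
  then show ?thesis
    using prime_ideal_prod_mem[OF assms(1)] prime_ideal_power_mem[OF assms(1)] by blast
qed

lemma mdvd_keys: "mdvd a b \<Longrightarrow> Poly_Mapping.keys a \<subseteq> Poly_Mapping.keys b"
  unfolding mdvd_def by (auto simp: in_keys_iff) (meson less_le_trans)

lemma mdvd_imp_add:
  assumes "mdvd g m"
  obtains d where "m = g + d"
proof
  let ?d = "\<lambda>v. Poly_Mapping.lookup m v - Poly_Mapping.lookup g v"
  have "finite {v. ?d v \<noteq> 0}"
    by (rule finite_subset[of _ "Poly_Mapping.keys m"]) (auto simp: in_keys_iff)
  then show "m = g + Abs_poly_mapping ?d"
    using assms unfolding mdvd_def by (intro poly_mapping_eqI) (simp add: lookup_add)
qed

lemma monom_in_ideal_if_mdvd: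
  assumes "is_ideal I" "monom_of g \<in> I" "mdvd g m"
  shows "monom_of m \<in> I"
  using assms(3)
proof (rule mdvd_imp_add)
  fix d assume "m = g + d"
  moreover have "monom_of d * monom_of g \<in> I"
    by (rule is_ideal_mult[OF assms(1,2)])
  ultimately show ?thesis by (metis add.commute monom_of_add)
qed

lemma exists_min_gen_mdvd:
  assumes "monom_of m \<in> I"
  shows "\<exists>g\<in>min_gens I. mdvd g m"
proof -
  let ?cand = "\<lambda>g. monom_of g \<in> I \<and> mdvd g m"
  let ?deg = "\<lambda>g. \<Sum>v\<in>Poly_Mapping.keys m. Poly_Mapping.lookup g v"
  have "?cand m" using assms by (simp add: mdvd_def)
  then obtain g where g: "?cand g" and least: "\<And>g'. ?cand g' \<Longrightarrow> ?deg g \<le> ?deg g'"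
    using ex_has_least_nat[of ?cand m ?deg] by blast
  have "g' = g" if "monom_of g' \<in> I" "mdvd g' g" for g'
  proof (rule ccontr)
    assume "g' \<noteq> g"
    then obtain v where v: "Poly_Mapping.lookup g' v < Poly_Mapping.lookup g v"
      using \<open>mdvd g' g\<close> unfolding mdvd_def by (metis le_neq_implies_less poly_mapping_eqI)
    then have "v \<in> Poly_Mapping.keys g"
      by (simp add: in_keys_iff)
    then have "v \<in> Poly_Mapping.keys m"
      using g mdvd_keys by blast
    then have "?deg g' < ?deg g"
      using v \<open>mdvd g' g\<close> by (intro sum_strict_mono_ex1) (auto simp: mdvd_def)
    moreover have "?cand g'"
      using that g unfolding mdvd_def by (meson order.trans)
    ultimately show False using least by (meson not_le)
  qed
  then have "g \<in> min_gens I" using g by (simp add: min_gens_def)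
  then show ?thesis using g by blast
qed

definition subst_zero :: "'v set \<Rightarrow> ('v, 'k::comm_ring_1) mpoly \<Rightarrow> ('v, 'k) mpoly" where
  "subst_zero C p = Abs_poly_mapping
     (\<lambda>m. if Poly_Mapping.keys m \<inter> C = {} then Poly_Mapping.lookup p m else 0)"

text \<open>The ideal generated by the variables indexed by C, realised as the kernel of the
  substitution of 0 for these variables.\<close>
definition vars_ideal :: "'v set \<Rightarrow> ('v, 'k::comm_ring_1) mpoly set" where
  "vars_ideal C = {p. subst_zero C p = 0}"

lemma lookup_subst_zero:
  "Poly_Mapping.lookup (subst_zero C p) m =
     (if Poly_Mapping.keys m \<inter> C = {} then Poly_Mapping.lookup p m else 0)"
proof -
  have "finite {m. (if Poly_Mapping.keys m \<inter> C = {} then Poly_Mapping.lookup p m else 0) \<noteq> 0}"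
    by (rule finite_subset[OF _ finite_lookup[of p]]) auto
  then show ?thesis unfolding subst_zero_def by simp
qed

lemma subst_zero_add: "subst_zero C (a + b) = subst_zero C a + subst_zero C b"
  by (rule poly_mapping_eqI) (simp add: lookup_subst_zero lookup_add)

lemma subst_zero_zero: "subst_zero C 0 = 0"
  by (rule poly_mapping_eqI) (simp add: lookup_subst_zero)

lemma subst_zero_one: "subst_zero C 1 = 1"
  by (rule poly_mapping_eqI) (simp add: lookup_subst_zero lookup_one when_def)

lemma subst_zero_mult:
  fixes a b :: "('v, 'k::comm_ring_1) mpoly"
  shows "subst_zero C (a * b) = subst_zero C a * subst_zero C b"
proof (rule poly_mapping_eqI)
  fix m
  have lookup_times: "Poly_Mapping.lookup (p * q) m =
      Sum_any (\<lambda>(x, y). Poly_Mapping.lookup p x * Poly_Mapping.lookup q y when m = x + y)"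
    for p q :: "('v, 'k) mpoly"
    unfolding times_poly_mapping.rep_eq by (rule prod_fun_unfold_prod) simp_all
  have keys_sum: "Poly_Mapping.keys (x + y) = Poly_Mapping.keys x \<union> Poly_Mapping.keys y"
    for x y :: "'v \<Rightarrow>\<^sub>0 nat"
    by (auto simp: in_keys_iff lookup_add)
  show "Poly_Mapping.lookup (subst_zero C (a * b)) m =
      Poly_Mapping.lookup (subst_zero C a * subst_zero C b) m"
  proof (cases "Poly_Mapping.keys m \<inter> C = {}")
    case True
    then have "Poly_Mapping.lookup (subst_zero C (a * b)) m = Poly_Mapping.lookup (a * b) m"
      by (simp add: lookup_subst_zero)
    also have "\<dots> = Poly_Mapping.lookup (subst_zero C a * subst_zero C b) m"
      unfolding lookup_times
      by (intro Sum_any.cong) (use True in \<open>auto simp: lookup_subst_zero keys_sum when_def; blast\<close>)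
    finally show ?thesis .
  next
    case False
    then have "Poly_Mapping.lookup (subst_zero C a * subst_zero C b) m =
        Sum_any (\<lambda>_ :: ('v \<Rightarrow>\<^sub>0 nat) \<times> ('v \<Rightarrow>\<^sub>0 nat). 0 :: 'k)"
      unfolding lookup_times lookup_subst_zero
      by (intro Sum_any.cong) (auto simp: keys_sum when_def split: if_splits)
    with False show ?thesis by (simp add: lookup_subst_zero)
  qed
qed

lemma monom_of_neq_zero: "(monom_of m :: ('v, 'k::comm_ring_1) mpoly) \<noteq> 0"
proof -
  have "Poly_Mapping.lookup (monom_of m :: ('v, 'k::comm_ring_1) mpoly) m = 1"
    by (simp add: monom_of_def)
  then show ?thesis by auto
qed

lemma subst_zero_monom_of:
  "subst_zero C (monom_of m) = (if Poly_Mapping.keys m \<inter> C = {} then monom_of m else 0)"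
  by (rule poly_mapping_eqI) (simp add: lookup_subst_zero monom_of_def lookup_single when_def)

lemma monom_in_vars_ideal_iff:
  "monom_of m \<in> vars_ideal C \<longleftrightarrow> Poly_Mapping.keys m \<inter> C \<noteq> {}"
  by (simp add: vars_ideal_def subst_zero_monom_of monom_of_neq_zero)

lemma is_ideal_vars_ideal: "is_ideal (vars_ideal C)"
  unfolding is_ideal_def vars_ideal_def
  by (simp add: subst_zero_zero subst_zero_add subst_zero_mult)

lemma is_prime_ideal_vars_ideal:
  "is_prime_ideal (vars_ideal C :: ('v::countable, 'k::idom) mpoly set)"
proof -
  have "is_ideal (vars_ideal C :: ('v, 'k) mpoly set)"
    by (rule is_ideal_vars_ideal)
  moreover have "(1 :: ('v, 'k) mpoly) \<notin> vars_ideal C"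
    by (simp add: vars_ideal_def subst_zero_one)
  moreover have "a \<in> vars_ideal C \<or> b \<in> vars_ideal C" if "a * b \<in> vars_ideal C"
    for a b :: "('v, 'k) mpoly"
  proof -
    have "subst_zero C a * subst_zero C b = 0"
      using that by (simp add: vars_ideal_def subst_zero_mult)
    then have "subst_zero C a = 0 \<or> subst_zero C b = 0"
      using mpoly_mult_neq_zero by blast
    then show ?thesis by (simp add: vars_ideal_def)
  qed
  ultimately show ?thesis
    unfolding is_prime_ideal_def by blast
qed

lemma vars_ideal_subset:
  fixes P :: "('v, 'k::comm_ring_1) mpoly set"
  assumes "is_ideal P" "\<And>v. v \<in> C \<Longrightarrow> var v \<in> P"
  shows "vars_ideal C \<subseteq> P"
proof
  fix p :: "('v, 'k) mpoly"
  assume "p \<in> vars_ideal C"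
  have "(\<Sum>m\<in>Poly_Mapping.keys p. Poly_Mapping.single m (Poly_Mapping.lookup p m)) \<in> P"
  proof (rule is_ideal_sum[OF assms(1)])
    fix m assume m: "m \<in> Poly_Mapping.keys p"
    have "Poly_Mapping.lookup (subst_zero C p) m = 0"
      using \<open>p \<in> vars_ideal C\<close> by (simp add: vars_ideal_def)
    then obtain v where v: "v \<in> Poly_Mapping.keys m" "v \<in> C"
      using m by (auto simp: lookup_subst_zero in_keys_iff split: if_splits)
    then have "mdvd (Poly_Mapping.single v 1) m"
      by (auto simp: mdvd_def lookup_single when_def in_keys_iff)
    then obtain d where "m = Poly_Mapping.single v 1 + d" by (rule mdvd_imp_add)
    then have "Poly_Mapping.single m (Poly_Mapping.lookup p m) =
        Poly_Mapping.single d (Poly_Mapping.lookup p m) * var v"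
      by (simp add: var_def monom_of_def mult_single add.commute)
    then show "Poly_Mapping.single m (Poly_Mapping.lookup p m) \<in> P"
      using is_ideal_mult[OF assms(1) assms(2)[OF v(2)]] by simp
  qed
  then show "p \<in> P"
    by (simp flip: poly_mapping_sum_single_keys)
qed

lemma gadj_sym: "gadj I u w \<Longrightarrow> gadj I w u"
  unfolding gadj_def by (auto simp: insert_commute)

lemma gadj_irrefl: "\<not> gadj I u u"
  unfolding gadj_def by auto

lemma symp_gadj: "symp (gadj I)"
  by (simp add: symp_def gadj_sym)

lemma irreflp_gadj: "irreflp (gadj I)"
  by (simp add: irreflp_def gadj_irrefl)

lemma support2_is_ideal: "support2 I \<Longrightarrow> is_ideal I"
  unfolding support2_def is_monomial_ideal_def using ideal_gen_is_ideal by blast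

lemma min_gen_edge:
  assumes "support2 I" "g \<in> min_gens I"
  obtains u w where "Poly_Mapping.keys g = {u, w}" "gadj I u w"
proof -
  have "card (Poly_Mapping.keys g) = 2" using assms unfolding support2_def by auto
  then obtain u w where "u \<noteq> w" "Poly_Mapping.keys g = {u, w}" by (auto simp: card_2_iff)
  with assms(2) show ?thesis using that unfolding gadj_def by blast
qed

lemma monomial_ideal_subset_vars_ideal:
  assumes "is_monomial_ideal I"
    and hit: "\<And>g. g \<in> min_gens I \<Longrightarrow> Poly_Mapping.keys g \<inter> C \<noteq> {}"
  shows "I \<subseteq> vars_ideal C"
proof -
  obtain G where G: "I = ideal_gen (monom_of ` G)"
    using assms(1) unfolding is_monomial_ideal_def by blast
  have "monom_of g \<in> vars_ideal C" if "g \<in> G" for g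
  proof -
    have "monom_of g \<in> I" using G ideal_gen_subset that by blast
    then obtain g' where "g' \<in> min_gens I" "mdvd g' g" using exists_min_gen_mdvd by blast
    then have "Poly_Mapping.keys g \<inter> C \<noteq> {}" using hit mdvd_keys by blast
    then show ?thesis by (simp add: monom_in_vars_ideal_iff)
  qed
  then show ?thesis
    unfolding G by (intro ideal_gen_least is_ideal_vars_ideal) blast
qed

text \<open>Otherwise the variables of P other than x_i would still cover every edge, so they would
  generate a prime between I and P that misses x_i.\<close>
lemma min_prime_omits_nbr:
  fixes I :: "('v::countable, 'k::idom) mpoly set"
  assumes I: "support2 I" and P: "P \<in> min_primes I" and i: "var i \<in> P"
  shows "\<exists>k. gadj I i k \<and> var k \<notin> P"
proof (rule ccontr)
  assume "\<not> ?thesis"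
  then have nbrs: "\<And>k. gadj I i k \<Longrightarrow> var k \<in> P" by blast
  have prime: "is_prime_ideal P" and "I \<subseteq> P"
    and minimal: "\<And>Q. is_prime_ideal Q \<Longrightarrow> I \<subseteq> Q \<Longrightarrow> Q \<subseteq> P \<Longrightarrow> Q = P"
    using P unfolding min_primes_def by auto
  define C where "C = {v. var v \<in> P} - {i}"
  have "Poly_Mapping.keys g \<inter> C \<noteq> {}" if g: "g \<in> min_gens I" for g
  proof -
    obtain u w where uw: "Poly_Mapping.keys g = {u, w}" "gadj I u w"
      using min_gen_edge[OF I g] .
    have "monom_of g \<in> P" using g \<open>I \<subseteq> P\<close> unfolding min_gens_def by blast
    then obtain v where v: "v \<in> {u, w}" "var v \<in> P"
      using monom_in_prime_ideal[OF prime] uw(1) by metis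
    show ?thesis
    proof (cases "v = i")
      case True
      then obtain x where "{u, w} = {i, x}" "gadj I i x"
        using v(1) uw(2) gadj_sym by (metis insert_commute insertE singletonD)
      moreover then have "x \<in> C"
        using nbrs gadj_irrefl unfolding C_def by fastforce
      ultimately show ?thesis using uw(1) by auto
    next
      case False
      then show ?thesis using v uw(1) unfolding C_def by auto
    qed
  qed
  then have "I \<subseteq> vars_ideal C"
    using I unfolding support2_def by (intro monomial_ideal_subset_vars_ideal) auto
  moreover have "vars_ideal C \<subseteq> P"
    using prime unfolding is_prime_ideal_def C_def by (intro vars_ideal_subset) auto
  ultimately have "vars_ideal C = P"
    by (intro minimal is_prime_ideal_vars_ideal)
  moreover have "(var i :: ('v, 'k) mpoly) \<notin> vars_ideal C"
    by (simp add: var_def monom_in_vars_ideal_iff C_def)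
  ultimately show False using i by simp
qed

definition second_nbrs :: "('v \<Rightarrow> 'v \<Rightarrow> bool) \<Rightarrow> 'v \<Rightarrow> 'v \<Rightarrow> 'v set" where
  "second_nbrs E i j = {m. \<exists>k. E i k \<and> k \<noteq> j \<and> E k m \<and> m \<noteq> i}"

lemma has_cycle_len_3:
  "E a b \<Longrightarrow> E b c \<Longrightarrow> E c a \<Longrightarrow> distinct [a, b, c] \<Longrightarrow> has_cycle_len E 3"
  unfolding has_cycle_len_def
  by (intro conjI exI[of _ "[a, b, c]"]) (auto simp: less_Suc_eq numeral_eq_Suc)

lemma has_cycle_len_4:
  "E a b \<Longrightarrow> E b c \<Longrightarrow> E c d \<Longrightarrow> E d a \<Longrightarrow> distinct [a, b, c, d] \<Longrightarrow> has_cycle_len E 4"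
  unfolding has_cycle_len_def
  by (intro conjI exI[of _ "[a, b, c, d]"]) (auto simp: less_Suc_eq numeral_eq_Suc)

lemma has_cycle_len_5:
  "E a b \<Longrightarrow> E b c \<Longrightarrow> E c d \<Longrightarrow> E d e \<Longrightarrow> E e a \<Longrightarrow> distinct [a, b, c, d, e] \<Longrightarrow>
    has_cycle_len E 5"
  unfolding has_cycle_len_def
  by (intro conjI exI[of _ "[a, b, c, d, e]"]) (auto simp: less_Suc_eq numeral_eq_Suc)

lemma girth_ge_mono: "girth_ge E g \<Longrightarrow> h \<le> g \<Longrightarrow> girth_ge E h"
  unfolding girth_ge_def by simp

lemma
  assumes sym: "symp E" and irrefl: "irreflp E" and girth: "girth_ge E 5"
    and ij: "E i j" and m: "m \<in> second_nbrs E i j"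
  shows second_nbr_neq: "m \<noteq> i" "m \<noteq> j"
    and second_nbr_not_adj: "\<not> E i m" "\<not> E j m"
proof -
  obtain k where k: "E i k" "k \<noteq> j" "E k m" "m \<noteq> i"
    using m unfolding second_nbrs_def by blast
  have no3: "\<not> has_cycle_len E 3" and no4: "\<not> has_cycle_len E 4"
    using girth unfolding girth_ge_def by auto
  have E_sym: "\<And>x y. E x y \<Longrightarrow> E y x"
    using sym by (simp add: symp_def)
  have ne: "i \<noteq> k" "k \<noteq> m" "i \<noteq> j"
    using k ij irrefl by (auto simp: irreflp_def)
  show "m \<noteq> i" by (fact k(4))
  show "m \<noteq> j"
  proof
    assume "m = j"
    then have "has_cycle_len E 3"
      by (intro has_cycle_len_3[of E i k j]) (use k ij ne E_sym in auto)
    with no3 show False ..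
  qed
  show "\<not> E i m"
  proof
    assume "E i m"
    then have "has_cycle_len E 3"
      by (intro has_cycle_len_3[of E i k m]) (use k ne E_sym in auto)
    with no3 show False ..
  qed
  show "\<not> E j m"
  proof
    assume "E j m"
    moreover have "m \<noteq> j" by fact
    ultimately have "has_cycle_len E 4"
      by (intro has_cycle_len_4[of E i k m j]) (use k ij ne E_sym in auto)
    with no4 show False ..
  qed
qed

lemma second_nbrs_independent:
  assumes sym: "symp E" and irrefl: "irreflp E" and girth: "girth_ge E 6"
    and m: "m \<in> second_nbrs E i j" and m': "m' \<in> second_nbrs E i j"
  shows "\<not> E m m'"
proof
  assume mm': "E m m'"
  obtain k where k: "E i k" "E k m" "m \<noteq> i"
    using m unfolding second_nbrs_def by blast
  obtain k' where k': "E i k'" "E k' m'" "m' \<noteq> i"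
    using m' unfolding second_nbrs_def by blast
  have no3: "\<not> has_cycle_len E 3" and no5: "\<not> has_cycle_len E 5"
    using girth unfolding girth_ge_def by auto
  have irr: "\<And>x. \<not> E x x" and E_sym: "\<And>x y. E x y \<Longrightarrow> E y x"
    using irrefl sym by (auto simp: irreflp_def symp_def)
  consider "k = k'" | "k \<noteq> k'" "k = m' \<or> k' = m" | "k \<noteq> k'" "k \<noteq> m'" "k' \<noteq> m"
    by blast
  then have "has_cycle_len E 3 \<or> has_cycle_len E 5"
  proof cases
    case 1
    then have "has_cycle_len E 3"
      by (intro has_cycle_len_3[of E k m m']) (use k k' mm' irr E_sym in auto)
    then show ?thesis ..
  next
    case 2
    then have "has_cycle_len E 3"
      by (intro has_cycle_len_3[of E i k k']) (use k k' irr E_sym in auto)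
    then show ?thesis ..
  next
    case 3
    then have "has_cycle_len E 5"
      by (intro has_cycle_len_5[of E i k m m' k']) (use k k' mm' irr E_sym in auto)
    then show ?thesis ..
  qed
  with no3 no5 show False by blast
qed

lemma edge_within_second_nbrs:
  assumes "symp E" "irreflp E" "girth_ge E 6" "E i j"
    and "u \<in> {i, j} \<union> second_nbrs E i j" "w \<in> {i, j} \<union> second_nbrs E i j" "E u w"
  shows "{u, w} = {i, j}"
proof -
  have E_sym: "\<And>x y. E x y \<Longrightarrow> E y x"
    using \<open>symp E\<close> by (simp add: symp_def)
  have "\<not> E x y" if "x \<in> second_nbrs E i j" "y \<in> {i, j} \<union> second_nbrs E i j" for x y
    using that second_nbr_not_adj[OF assms(1,2) girth_ge_mono[OF assms(3)] assms(4)]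
      second_nbrs_independent[OF assms(1-3)]
    by (auto dest: E_sym)
  moreover have "\<not> E u u" using \<open>irreflp E\<close> by (simp add: irreflp_def)
  ultimately show ?thesis
    using assms(5-7) by (auto dest: E_sym)
qed

lemma gdist_le_1_if_adj: "E x y \<Longrightarrow> gdist E x y \<le> 1"
proof -
  assume "E x y"
  then have "walk_of_len E x y 1"
    unfolding walk_of_len_def by (intro exI[of _ "[x, y]"]) simp
  then have "gdist E x y \<le> enat 1"
    unfolding gdist_def by (rule INF_lower[OF CollectI])
  then show ?thesis by (simp add: one_enat_def)
qed

lemma nonleaf_nbr_has_second_nbr:
  assumes sym: "symp E" and leaves_far: "\<forall>l. is_leaf E l \<longrightarrow> gdist E i l \<ge> 2"
    and "E i k" "k \<noteq> j"
  shows "\<exists>m\<in>second_nbrs E i j. E k m"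
proof -
  have "\<not> is_leaf E k"
    using leaves_far gdist_le_1_if_adj[of E i k, OF \<open>E i k\<close>] order.trans[of "2::enat" "gdist E i k" 1] by auto
  then have "{m. E k m} \<noteq> {i}" by (auto simp: is_leaf_def)
  moreover have "E k i" using \<open>E i k\<close> sym by (simp add: symp_def)
  ultimately have "\<exists>m. E k m \<and> m \<noteq> i" by blast
  then show ?thesis using assms(3,4) unfolding second_nbrs_def by blast
qed

definition edge_gens :: "('v, 'k::comm_ring_1) mpoly set \<Rightarrow> 'v \<Rightarrow> 'v \<Rightarrow> ('v \<Rightarrow>\<^sub>0 nat) set" where
  "edge_gens I u w = {g \<in> min_gens I. Poly_Mapping.keys g = {u, w}}"

lemma alpha_eq_card_edge_gens: "alpha I u w = card (edge_gens I u w)"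
  unfolding alpha_def edge_gens_def ..

lemma alpha_sym: "alpha I u w = alpha I w u"
  unfolding alpha_def by (simp add: insert_commute)

lemma min_gens_antichain: "g \<in> min_gens I \<Longrightarrow> h \<in> min_gens I \<Longrightarrow> mdvd g h \<Longrightarrow> g = h"
  unfolding min_gens_def by blast

lemma antichain_not_below_min_exponents:
  assumes "2 \<le> card G" "\<And>h. h \<in> G \<Longrightarrow> Poly_Mapping.keys h \<subseteq> {i, j}"
    and antichain: "\<And>g h. g \<in> G \<Longrightarrow> h \<in> G \<Longrightarrow> mdvd g h \<Longrightarrow> g = h" and "g \<in> G"
  shows "\<not> (Poly_Mapping.lookup g i \<le> Min ((\<lambda>h. Poly_Mapping.lookup h i) ` G) \<and>
             Poly_Mapping.lookup g j \<le> Min ((\<lambda>h. Poly_Mapping.lookup h j) ` G))"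
proof
  assume below: "Poly_Mapping.lookup g i \<le> Min ((\<lambda>h. Poly_Mapping.lookup h i) ` G) \<and>
    Poly_Mapping.lookup g j \<le> Min ((\<lambda>h. Poly_Mapping.lookup h j) ` G)"
  have "finite G" using assms(1) by (metis card.infinite not_numeral_le_zero)
  have "mdvd g h" if "h \<in> G" for h
    unfolding mdvd_def
  proof
    fix v
    show "Poly_Mapping.lookup g v \<le> Poly_Mapping.lookup h v"
    proof (cases "v \<in> {i, j}")
      case True
      have "Min ((\<lambda>h. Poly_Mapping.lookup h v) ` G) \<le> Poly_Mapping.lookup h v"
        using \<open>finite G\<close> that by simp
      then show ?thesis
        using below True by auto
    next
      case False
      then have "v \<notin> Poly_Mapping.keys g" using assms(2)[OF \<open>g \<in> G\<close>] by blast
      then show ?thesis by (simp add: in_keys_iff)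
    qed
  qed
  then have "G \<subseteq> {g}" using antichain \<open>g \<in> G\<close> by blast
  then have "card G \<le> card {g}" by (intro card_mono) simp_all
  with assms(1) show False by simp
qed

lemma monom_in_loc_contr:
  assumes "is_prime_ideal P" "is_ideal I" "var k \<notin> P" "monom_of g \<in> I"
    and below: "\<And>v. v \<noteq> k \<Longrightarrow> Poly_Mapping.lookup g v \<le> Poly_Mapping.lookup F v"
  shows "monom_of F \<in> loc_contr I P"
proof -
  let ?s = "monom_of (Poly_Mapping.single k (Poly_Mapping.lookup g k))"
  have "?s \<notin> P"
  proof
    assume "?s \<in> P"
    then obtain v where "v \<in> Poly_Mapping.keys (Poly_Mapping.single k (Poly_Mapping.lookup g k))"
      "var v \<in> P"
      using monom_in_prime_ideal[OF assms(1)] by blast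
    with assms(3) show False by (simp split: if_splits)
  qed
  moreover have "mdvd g (Poly_Mapping.single k (Poly_Mapping.lookup g k) + F)"
    using below by (auto simp: mdvd_def lookup_add lookup_single when_def)
  then have "?s * monom_of F \<in> I"
    using monom_in_ideal_if_mdvd[OF assms(2,4)] by (simp flip: monom_of_add)
  ultimately show ?thesis unfolding loc_contr_def by blast
qed

lemma monom_notin_if_keys_in_second_nbrs:
  assumes I: "support2 I" and girth: "girth_ge (gadj I) 6" and ij: "gadj I i j"
    and alpha: "2 \<le> alpha I i j"
    and keys: "Poly_Mapping.keys F \<subseteq> {i, j} \<union> second_nbrs (gadj I) i j"
    and Fi: "Poly_Mapping.lookup F i = Min ((\<lambda>g. Poly_Mapping.lookup g i) ` edge_gens I i j)"
    and Fj: "Poly_Mapping.lookup F j = Min ((\<lambda>g. Poly_Mapping.lookup g j) ` edge_gens I i j)"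
  shows "monom_of F \<notin> I"
proof
  assume "monom_of F \<in> I"
  then obtain g where g: "g \<in> min_gens I" "mdvd g F"
    using exists_min_gen_mdvd by blast
  obtain u w where uw: "Poly_Mapping.keys g = {u, w}" "gadj I u w"
    using min_gen_edge[OF I g(1)] .
  have "{u, w} = {i, j}"
    using edge_within_second_nbrs[OF symp_gadj irreflp_gadj girth ij _ _ uw(2)]
      mdvd_keys[OF g(2)] keys uw(1) by blast
  then have "g \<in> edge_gens I i j"
    using g(1) uw(1) by (simp add: edge_gens_def)
  moreover have "Poly_Mapping.lookup g i \<le> Poly_Mapping.lookup F i"
    "Poly_Mapping.lookup g j \<le> Poly_Mapping.lookup F j"
    using g(2) by (simp_all add: mdvd_def)
  moreover have "\<not> (Poly_Mapping.lookup g i \<le> Min ((\<lambda>h. Poly_Mapping.lookup h i) ` edge_gens I i j) \<and>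
      Poly_Mapping.lookup g j \<le> Min ((\<lambda>h. Poly_Mapping.lookup h j) ` edge_gens I i j))"
    if "g \<in> edge_gens I i j"
    using alpha that
    by (intro antichain_not_below_min_exponents)
      (auto simp: alpha_eq_card_edge_gens edge_gens_def intro: min_gens_antichain)
  ultimately show False
    using Fi Fj by simp
qed

lemma monom_in_symb_power1:
  fixes I :: "('v::countable, 'k::idom) mpoly set"
  assumes I: "support2 I" and ij: "gadj I i j" and alpha: "2 \<le> alpha I i j"
    and leaves_far: "\<forall>l. is_leaf (gadj I) l \<longrightarrow> gdist (gadj I) i l \<ge> 2"
    and Fi: "Poly_Mapping.lookup F i = Min ((\<lambda>g. Poly_Mapping.lookup g i) ` edge_gens I i j)"
    and Fj: "Poly_Mapping.lookup F j = Min ((\<lambda>g. Poly_Mapping.lookup g j) ` edge_gens I i j)"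
    and far_gens: "\<And>k m. m \<in> second_nbrs (gadj I) i j \<Longrightarrow> gadj I k m \<Longrightarrow>
      \<exists>g\<in>min_gens I. Poly_Mapping.keys g = {k, m} \<and> Poly_Mapping.lookup g m \<le> Poly_Mapping.lookup F m"
  shows "monom_of F \<in> symb_power1 I"
  unfolding symb_power1_def
proof
  fix P assume P: "P \<in> min_primes I"
  have prime: "is_prime_ideal P" using P by (simp add: min_primes_def)
  have ideal: "is_ideal I" using I by (rule support2_is_ideal)
  have gen_I: "monom_of g \<in> I" if "g \<in> min_gens I" for g
    using that by (simp add: min_gens_def)
  have finite_nonempty: "finite (edge_gens I i j)" "edge_gens I i j \<noteq> {}"
    using alpha by (auto simp: alpha_eq_card_edge_gens intro: card_ge_0_finite)
  have edge_gen_outside: "Poly_Mapping.lookup g v = 0" if "g \<in> edge_gens I i j" "v \<notin> {i, j}" for g v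
    using that by (simp add: edge_gens_def flip: not_in_keys_iff_lookup_eq_zero)
  consider "var j \<notin> P" | "var i \<notin> P" | "var i \<in> P" "var j \<in> P" by blast
  then show "monom_of F \<in> loc_contr I P"
  proof cases
    case 1
    have "Poly_Mapping.lookup F i \<in> (\<lambda>g. Poly_Mapping.lookup g i) ` edge_gens I i j"
      unfolding Fi using finite_nonempty by simp
    then obtain g where g: "g \<in> edge_gens I i j" "Poly_Mapping.lookup g i = Poly_Mapping.lookup F i"
      by auto
    show ?thesis
    proof (rule monom_in_loc_contr[OF prime ideal 1])
      show "monom_of g \<in> I" using g(1) gen_I by (simp add: edge_gens_def)
      show "Poly_Mapping.lookup g v \<le> Poly_Mapping.lookup F v" if "v \<noteq> j" for v
        using g edge_gen_outside[OF g(1)] that by (cases "v = i") simp_all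
    qed
  next
    case 2
    have "Poly_Mapping.lookup F j \<in> (\<lambda>g. Poly_Mapping.lookup g j) ` edge_gens I i j"
      unfolding Fj using finite_nonempty by simp
    then obtain g where g: "g \<in> edge_gens I i j" "Poly_Mapping.lookup g j = Poly_Mapping.lookup F j"
      by auto
    show ?thesis
    proof (rule monom_in_loc_contr[OF prime ideal 2])
      show "monom_of g \<in> I" using g(1) gen_I by (simp add: edge_gens_def)
      show "Poly_Mapping.lookup g v \<le> Poly_Mapping.lookup F v" if "v \<noteq> i" for v
        using g edge_gen_outside[OF g(1)] that by (cases "v = j") simp_all
    qed
  next
    case 3
    obtain k where k: "gadj I i k" "var k \<notin> P"
      using min_prime_omits_nbr[OF I P 3(1)] by blast
    then have "k \<noteq> j" using 3(2) by blast
    then obtain m where m: "m \<in> second_nbrs (gadj I) i j" "gadj I k m"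
      using nonleaf_nbr_has_second_nbr[OF symp_gadj leaves_far k(1)] by blast
    obtain g where g: "g \<in> min_gens I" "Poly_Mapping.keys g = {k, m}"
      "Poly_Mapping.lookup g m \<le> Poly_Mapping.lookup F m"
      using far_gens[OF m] by blast
    show ?thesis
    proof (rule monom_in_loc_contr[OF prime ideal k(2) gen_I[OF g(1)]])
      show "Poly_Mapping.lookup g v \<le> Poly_Mapping.lookup F v" if "v \<noteq> k" for v
      proof (cases "v = m")
        case False
        then have "Poly_Mapping.lookup g v = 0"
          using g(2) that by (simp flip: not_in_keys_iff_lookup_eq_zero)
        then show ?thesis by simp
      qed (use g(3) in simp)
    qed
  qed
qed

lemma edge_gens_uniformly_bounded:
  fixes I :: "('v::finite, 'k::comm_ring_1) mpoly set"
  obtains N where "\<And>u w. gadj I u w \<Longrightarrow>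
    \<exists>g\<in>min_gens I. Poly_Mapping.keys g = {u, w} \<and> Poly_Mapping.lookup g w \<le> N"
proof -
  have "\<forall>e. \<exists>g. gadj I (fst e) (snd e) \<longrightarrow> g \<in> min_gens I \<and> Poly_Mapping.keys g = {fst e, snd e}"
    unfolding gadj_def by blast
  then obtain gen where gen: "\<And>e. gadj I (fst e) (snd e) \<Longrightarrow>
      gen e \<in> min_gens I \<and> Poly_Mapping.keys (gen e) = {fst e, snd e}"
    by metis
  define N where "N = Max (range (\<lambda>e. Poly_Mapping.lookup (gen e) (snd e)))"
  have "Poly_Mapping.lookup (gen (u, w)) w \<le> N" for u w
    unfolding N_def by (rule Max_ge) (auto intro: rev_image_eqI[of "(u, w)"])
  then show ?thesis
    using that gen by (metis fst_conv snd_conv)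
qed

lemma symb_power1_neq_if_leaves_far:
  fixes I :: "('v::finite, 'k::idom) mpoly set"
  assumes I: "support2 I" and girth: "girth_ge (gadj I) 6" and ij: "gadj I i j"
    and alpha: "2 \<le> alpha I i j"
    and leaves_far: "\<forall>l. is_leaf (gadj I) l \<longrightarrow> gdist (gadj I) i l \<ge> 2"
  shows "symb_power1 I \<noteq> I"
proof -
  let ?M = "second_nbrs (gadj I) i j"
  let ?A = "Min ((\<lambda>g. Poly_Mapping.lookup g i) ` edge_gens I i j)"
  let ?B = "Min ((\<lambda>g. Poly_Mapping.lookup g j) ` edge_gens I i j)"
  obtain N where N: "\<And>u w. gadj I u w \<Longrightarrow>
      \<exists>g\<in>min_gens I. Poly_Mapping.keys g = {u, w} \<and> Poly_Mapping.lookup g w \<le> N"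
    using edge_gens_uniformly_bounded by blast
  define F :: "'v \<Rightarrow>\<^sub>0 nat" where
    "F = Abs_poly_mapping (\<lambda>v. if v = i then ?A else if v = j then ?B else if v \<in> ?M then N else 0)"
  have lookup_F:
    "Poly_Mapping.lookup F v = (if v = i then ?A else if v = j then ?B else if v \<in> ?M then N else 0)"
    for v
    unfolding F_def by simp
  have "i \<noteq> j" using ij gadj_irrefl by metis
  have M_neq: "m \<noteq> i" "m \<noteq> j" if "m \<in> ?M" for m
    using second_nbr_neq[OF symp_gadj irreflp_gadj girth_ge_mono[OF girth] ij that] by auto
  have "monom_of F \<notin> I"
    by (rule monom_notin_if_keys_in_second_nbrs[OF I girth ij alpha])
      (auto simp: lookup_F in_keys_iff \<open>i \<noteq> j\<close> split: if_splits)
  moreover have "monom_of F \<in> symb_power1 I"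
    by (rule monom_in_symb_power1[OF I ij alpha leaves_far])
      (use N M_neq in \<open>auto simp: lookup_F \<open>i \<noteq> j\<close>\<close>)
  ultimately show ?thesis by blast
qed

theorem proposition3p3:
  fixes I :: "('v::finite, 'k::field) mpoly set"
    and xi xj :: 'v
  assumes "support2 I"
    and "girth_ge (gadj I) 6"
    and "gadj I xi xj"
    and "alpha I xi xj \<ge> 2"
    and "(\<forall>l. is_leaf (gadj I) l \<longrightarrow> gdist (gadj I) xi l \<ge> 2) \<or>
         (\<forall>l. is_leaf (gadj I) l \<longrightarrow> gdist (gadj I) xj l \<ge> 2)"
  shows "symb_power1 I \<noteq> I"
  using assms(5)
proof
  assume "\<forall>l. is_leaf (gadj I) l \<longrightarrow> gdist (gadj I) xi l \<ge> 2"
  then show ?thesis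
    by (rule symb_power1_neq_if_leaves_far[OF assms(1-4)])
next
  assume "\<forall>l. is_leaf (gadj I) l \<longrightarrow> gdist (gadj I) xj l \<ge> 2"
  moreover have "gadj I xj xi" "alpha I xj xi \<ge> 2"
    using assms(3,4) by (simp_all add: gadj_sym alpha_sym)
  ultimately show ?thesis
    using symb_power1_neq_if_leaves_far[OF assms(1,2)] by blast
qed

end
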